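(* Under the standing assumptions, suppose the map $\gamma:H\mapsto\bigoplus_{h\in H}J_h$, defined on the set of subgroupoids of $\mathcal G$, is injective. Then for every wide subgroupoid $H$ of $\mathcal G$ there is no subgroupoid $H'$ of $\mathcal G$ with $\mathcal S_H\subseteq H'\subseteq H$ and $H'\neq H$, where $\mathcal S_H=\{h\in H: J_h\neq\{0\}\}$.
   Context: All rings and algebras are associative and unital. A groupoid is a nonempty set $\mathcal G$ with a partially defined associative multiplication in which every $g$ has an inverse $g^{-1}$, a left identity $r(g)=gg^{-1}$ and a right identity $d(g)=g^{-1}g$; $gh$ is defined iff $d(g)=r(h)$; $\mathcal G_0$ is the set of identities. A subgroupoid is a nonempty subset closed under inverses and defined products; it is wide if it contains $\mathcal G_0$. Standing assumptions: $K$ commutative ring, $R$ a $K$-algebra, $\mathcal G$ a finite groupoid, $\beta=(\{E_g\},\{\beta_g\})$ a unital action of $\mathcal G$ on $R$: $E_g=E_{r(g)}$ is an ideal of $R$, unital with identity $1_g$ (so $1_{g^{-1}}=1_{d(g)}$), $\beta_g:E_{g^{-1}}\to E_g$ a $K$-algebra isomorphism, $\beta_e=\mathrm{id}_{E_e}$ for $e\in\mathcal G_0$, $\beta_g\beta_h(x)=\beta_{gh}(x)$ whenever $d(g)=r(h)$, $x\in E_{h^{-1}}$; $R=\bigoplus_{e\in\mathcal G_0}E_e$; and $R$ is a $\beta$-Galois extension of $R^\beta$: there exist $x_i,y_i\in R$ ($1\le i\le m$) with $\sum_i x_i\beta_g(y_i1_{g^{-1}})=1_g$ if $g\in\mathcal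 G_0$ and $=0$ otherwise. For $g\in\mathcal G$, $J_g=\{r\in E_g: r\beta_g(x1_{g^{-1}})=xr\ \forall x\in R\}$. *)

theory Defs
  imports Main
begin

text \<open>The product g*h is "defined" iff d g = r h, where r g = g g^-1 and d g = g^-1 g.\<close>

definition grd_r :: "('g \<Rightarrow> 'g \<Rightarrow> 'g) \<Rightarrow> ('g \<Rightarrow> 'g) \<Rightarrow> 'g \<Rightarrow> 'g" where
  "grd_r mult ginv g = mult g (ginv g)"

definition grd_d :: "('g \<Rightarrow> 'g \<Rightarrow> 'g) \<Rightarrow> ('g \<Rightarrow> 'g) \<Rightarrow> 'g \<Rightarrow> 'g" where
  "grd_d mult ginv g = mult (ginv g) g"

definition groupoid :: "'g set \<Rightarrow> ('g \<Rightarrow> 'g \<Rightarrow> 'g) \<Rightarrow> ('g \<Rightarrow> 'g) \<Rightarrow> bool" where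
  "groupoid G mult ginv \<longleftrightarrow>
     G \<noteq> {} \<and>
     (\<forall>g\<in>G. ginv g \<in> G \<and> ginv (ginv g) = g) \<and>
     (\<forall>g\<in>G. \<forall>h\<in>G. grd_d mult ginv g = grd_r mult ginv h \<longrightarrow>
        mult g h \<in> G \<and>
        grd_r mult ginv (mult g h) = grd_r mult ginv g \<and>
        grd_d mult ginv (mult g h) = grd_d mult ginv h) \<and>
     (\<forall>g\<in>G. \<forall>h\<in>G. \<forall>k\<in>G.
        grd_d mult ginv g = grd_r mult ginv h \<and> grd_d mult ginv h = grd_r mult ginv k \<longrightarrow>
        mult (mult g h) k = mult g (mult h k)) \<and>
     (\<forall>g\<in>G. mult (grd_r mult ginv g) g = g \<and> mult g (grd_d mult ginv g) = g)"

definition grd_units :: "'g set \<Rightarrow> ('g \<Rightarrow> 'g \<Rightarrow> 'g) \<Rightarrow> ('g \<Rightarrow> 'g) \<Rightarrow> 'g set" where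
  "grd_units G mult ginv = grd_r mult ginv ` G"

definition subgroupoid :: "'g set \<Rightarrow> ('g \<Rightarrow> 'g \<Rightarrow> 'g) \<Rightarrow> ('g \<Rightarrow> 'g) \<Rightarrow> 'g set \<Rightarrow> bool" where
  "subgroupoid G mult ginv H \<longleftrightarrow>
     H \<noteq> {} \<and> H \<subseteq> G \<and> (\<forall>h\<in>H. ginv h \<in> H) \<and>
     (\<forall>g\<in>H. \<forall>h\<in>H. grd_d mult ginv g = grd_r mult ginv h \<longrightarrow> mult g h \<in> H)"

definition wide_subgroupoid :: "'g set \<Rightarrow> ('g \<Rightarrow> 'g \<Rightarrow> 'g) \<Rightarrow> ('g \<Rightarrow> 'g) \<Rightarrow> 'g set \<Rightarrow> bool" where
  "wide_subgroupoid G mult ginv H \<longleftrightarrow>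
     subgroupoid G mult ginv H \<and> grd_units G mult ginv \<subseteq> H"

definition two_sided_ideal :: "'r::ring_1 set \<Rightarrow> bool" where
  "two_sided_ideal I \<longleftrightarrow> 0 \<in> I \<and> (\<forall>x\<in>I. \<forall>y\<in>I. x + y \<in> I) \<and> (\<forall>x\<in>I. - x \<in> I) \<and>
     (\<forall>x\<in>I. \<forall>a. a * x \<in> I \<and> x * a \<in> I)"

definition unital_action ::
  "'g set \<Rightarrow> ('g \<Rightarrow> 'g \<Rightarrow> 'g) \<Rightarrow> ('g \<Rightarrow> 'g) \<Rightarrow> ('g \<Rightarrow> 'r::ring_1 set) \<Rightarrow> ('g \<Rightarrow> 'r) \<Rightarrow> ('g \<Rightarrow> 'r \<Rightarrow> 'r) \<Rightarrow> bool" where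
  "unital_action G mult ginv E one beta \<longleftrightarrow>
     (\<forall>g\<in>G. E g = E (grd_r mult ginv g) \<and> one g = one (grd_r mult ginv g)) \<and>
     (\<forall>g\<in>G. two_sided_ideal (E g) \<and> one g \<in> E g \<and>
        (\<forall>x\<in>E g. one g * x = x \<and> x * one g = x)) \<and>
     (\<forall>g\<in>G. bij_betw (beta g) (E (ginv g)) (E g) \<and>
        (\<forall>x\<in>E (ginv g). \<forall>y\<in>E (ginv g).
           beta g (x + y) = beta g x + beta g y \<and> beta g (x * y) = beta g x * beta g y) \<and>
        beta g (one (ginv g)) = one g) \<and>
     (\<forall>e\<in>grd_units G mult ginv. \<forall>x\<in>E e. beta e x = x) \<and>
     (\<forall>g\<in>G. \<forall>h\<in>G. grd_d mult ginv g = grd_r mult ginv h \<longrightarrow>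
        (\<forall>x\<in>E (ginv h). beta g (beta h x) = beta (mult g h) x)) \<and>
     (\<forall>x::'r. \<exists>!f. (\<forall>e\<in>grd_units G mult ginv. f e \<in> E e) \<and>
        (\<forall>e. e \<notin> grd_units G mult ginv \<longrightarrow> f e = 0) \<and>
        x = (\<Sum>e\<in>grd_units G mult ginv. f e))"

definition galois_extension ::
  "'g set \<Rightarrow> ('g \<Rightarrow> 'g \<Rightarrow> 'g) \<Rightarrow> ('g \<Rightarrow> 'g) \<Rightarrow> ('g \<Rightarrow> 'r::ring_1) \<Rightarrow> ('g \<Rightarrow> 'r \<Rightarrow> 'r) \<Rightarrow> bool" where
  "galois_extension G mult ginv one beta \<longleftrightarrow>
     (\<exists>(m::nat) (xs::nat \<Rightarrow> 'r) ys. \<forall>g\<in>G.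
        (\<Sum>i<m. xs i * beta g (ys i * one (ginv g))) =
        (if g \<in> grd_units G mult ginv then one g else 0))"

definition Jset :: "('g \<Rightarrow> 'r::ring_1 set) \<Rightarrow> ('g \<Rightarrow> 'r) \<Rightarrow> ('g \<Rightarrow> 'g) \<Rightarrow> ('g \<Rightarrow> 'r \<Rightarrow> 'r) \<Rightarrow> 'g \<Rightarrow> 'r set" where
  "Jset E one ginv beta g = {a \<in> E g. \<forall>x. a * beta g (x * one (ginv g)) = x * a}"

text \<open>gamma H = (external) direct sum of the J_h, h in H: families supported in H with h-component in J_h.\<close>
definition gammaJ :: "('g \<Rightarrow> 'r::ring_1 set) \<Rightarrow> ('g \<Rightarrow> 'r) \<Rightarrow> ('g \<Rightarrow> 'g) \<Rightarrow> ('g \<Rightarrow> 'r \<Rightarrow> 'r) \<Rightarrow> 'g set \<Rightarrow> ('g \<Rightarrow> 'r) set" where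
  "gammaJ E one ginv beta H = {f. (\<forall>h\<in>H. f h \<in> Jset E one ginv beta h) \<and> (\<forall>g. g \<notin> H \<longrightarrow> f g = 0)}"

definition SH :: "('g \<Rightarrow> 'r::ring_1 set) \<Rightarrow> ('g \<Rightarrow> 'r) \<Rightarrow> ('g \<Rightarrow> 'g) \<Rightarrow> ('g \<Rightarrow> 'r \<Rightarrow> 'r) \<Rightarrow> 'g set \<Rightarrow> 'g set" where
  "SH E one ginv beta H = {h \<in> H. Jset E one ginv beta h \<noteq> {0}}"

end

theory Submission
  imports Defs
begin

text \<open>Components of \<open>\<gamma>(H)\<close> indexed by \<open>h \<in> H - \<S>\<^sub>H\<close> range over \<open>J\<^sub>h = {0}\<close>, so shrinking
  \<open>H\<close> to any \<open>H'\<close> with \<open>\<S>\<^sub>H \<subseteq> H'\<close> does not change \<open>\<gamma>\<close>; injectivity of \<open>\<gamma>\<close> then forces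
  \<open>H' = H\<close>.\<close>

lemma Jset_eq_zero_if_notin_SH:
  assumes "h \<in> H" and "h \<notin> SH E one ginv beta H"
  shows "Jset E one ginv beta h = {0}"
  using assms unfolding SH_def by blast

lemma gammaJ_eq_if_SH_subset:
  assumes "SH E one ginv beta H \<subseteq> H'" and "H' \<subseteq> H"
  shows "gammaJ E one ginv beta H' = gammaJ E one ginv beta H"
proof -
  have J_trivial: "Jset E one ginv beta h = {0}" if "h \<in> H" "h \<notin> H'" for h
    using that assms(1) Jset_eq_zero_if_notin_SH[of h H] by blast
  have "(\<forall>h\<in>H'. f h \<in> Jset E one ginv beta h) \<and> (\<forall>g. g \<notin> H' \<longrightarrow> f g = 0) \<longleftrightarrow>
        (\<forall>h\<in>H. f h \<in> Jset E one ginv beta h) \<and> (\<forall>g. g \<notin> H \<longrightarrow> f g = 0)" for f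
    using assms(2) J_trivial by (metis singletonD singletonI subsetD)
  then show ?thesis
    unfolding gammaJ_def by blast
qed

theorem lemma3p8:
  fixes G :: "'g set" and mult :: "'g \<Rightarrow> 'g \<Rightarrow> 'g" and ginv :: "'g \<Rightarrow> 'g"
    and E :: "'g \<Rightarrow> 'r::ring_1 set" and one :: "'g \<Rightarrow> 'r" and beta :: "'g \<Rightarrow> 'r \<Rightarrow> 'r"
  assumes "groupoid G mult ginv" and "finite G"
    and "unital_action G mult ginv E one beta"
    and "galois_extension G mult ginv one beta"
    and inj: "inj_on (gammaJ E one ginv beta) {H. subgroupoid G mult ginv H}"
    and wide: "wide_subgroupoid G mult ginv H"
  shows "\<not> (\<exists>H'. subgroupoid G mult ginv H' \<and> SH E one ginv beta H \<subseteq> H' \<and> H' \<subseteq> H \<and> H' \<noteq> H)"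
proof
  assume "\<exists>H'. subgroupoid G mult ginv H' \<and> SH E one ginv beta H \<subseteq> H' \<and> H' \<subseteq> H \<and> H' \<noteq> H"
  then obtain H' where sub': "subgroupoid G mult ginv H'"
    and "SH E one ginv beta H \<subseteq> H'" "H' \<subseteq> H" and "H' \<noteq> H"
    by blast
  then have "gammaJ E one ginv beta H' = gammaJ E one ginv beta H"
    using gammaJ_eq_if_SH_subset by blast
  moreover have "subgroupoid G mult ginv H"
    using wide unfolding wide_subgroupoid_def by blast
  ultimately have "H' = H"
    using inj sub' by (auto dest: inj_onD)
  with \<open>H' \<noteq> H\<close> show False ..
qed

end
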